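(* Let $l\ge4$. In the simple vertex operator algebra $L_{B_l}(-l+\tfrac32,0)$ the following relation holds: $$(2l-1)\sum_{i=1}^l\big(e_{\epsilon_i}(-1)f_{\epsilon_i}(-1)+f_{\epsilon_i}(-1)e_{\epsilon_i}(-1)\big)\mathbf 1=4\sum_{\alpha\in\Delta^+_{D_l}}\big(e_\alpha(-1)f_\alpha(-1)+f_\alpha(-1)e_\alpha(-1)\big)\mathbf 1+\sum_{i=1}^lh_{\epsilon_i}(-1)^2\mathbf 1.$$
   Context: Setup: for $l\ge4$ let $Cliff(A)$ be the Clifford algebra on $A=\bigoplus_{i=1}^l(\mathbb C a_i\oplus\mathbb C a_i^* )$ with $[a_i,a_j]_+=[a_i^*,a_j^*]_+=0$, $[a_i,a_j^*]_+=\delta_{ij}$; put $:xy:=\tfrac12(xy-yx)$. The span of all $:xy:$ is $\mathfrak g_{D_l}$, and $\mathfrak g_{B_l}=\mathfrak g_{D_l}\oplus A$ is the simple Lie algebra of type $B_l$, with Cartan subalgebra spanned by $H_i=:a_ia_i^*:$, $\epsilon_i(H_j)=\delta_{ij}$. Positive roots: $\Delta^+_{D_l}=\{\epsilon_i\pm\epsilon_j:i<j\}$, and $\Delta^+_{B_l}=\Delta^+_{D_l}\cup\{\epsilon_i\}$; the short positive roots (squared length 1, with long roots of squared length 2) are the $\epsilon_i$. Root vectors ($i<j$): $e_{\epsilon_i-\epsilon_j}=:a_ia_j^*:$, $e_{\epsilon_i+\epsilon_j}=:a_ia_j:$, $f_{\epsilon_i-\epsilon_j}=:a_ja_i^*:$,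 $f_{\epsilon_i+\epsilon_j}=:a_j^*a_i^*:$, $e_{\epsilon_i}=a_i$, $f_{\epsilon_i}=a_i^*$; $h_\alpha=[e_\alpha,f_\alpha]$, so $h_{\epsilon_i}=2H_i$. $\hat{\mathfrak g}_{B_l}=\mathfrak g_{B_l}\otimes\mathbb C[t,t^{-1}]\oplus\mathbb Cc$, $x(n)=x\otimes t^n$; $L_{B_l}(k,0)$ is the simple quotient of the level-$k$ vacuum generalized Verma module $N_{B_l}(k,0)$ (vacuum vector $\mathbf 1$), and the displayed vectors denote their images in $L_{B_l}(k,0)$. *)

theory Defs
  imports Complex_Main
begin

text \<open>Index set of the (2l+1)-dimensional space: a_i (P i), a_i^* (M i), and an
  extra vector e0 (Z).  The symmetric form has (a_i,a_j^*) = delta_ij as in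
  the Clifford algebra and (e0,e0) = -2.  The Lie algebra g_{B_l} is realised as
  the B-antisymmetric matrices (i.e. so(2l+1)); the element :xy: of g_{D_l} is
  realised as its adjoint action on A, z |-> x(y,z) - (x,z)y, which is
  wedge x y, and the element x in A is realised as wedge e0 x.  With these
  choices the brackets agree with those of the paper ([x,y] = 2:xy: for x,y in A).\<close>

datatype ix = Z | P nat | M nat

type_synonym vec = "ix \<Rightarrow> complex"
type_synonym mat = "ix \<Rightarrow> ix \<Rightarrow> complex"

definition Jl :: "nat \<Rightarrow> ix set" where
  "Jl l = {Z} \<union> P ` {1..l} \<union> M ` {1..l}"

definition Bm :: "ix \<Rightarrow> ix \<Rightarrow> complex" where
  "Bm p q = (case (p, q) of
      (P i, M j) \<Rightarrow> (if i = j then 1 else 0)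
    | (M i, P j) \<Rightarrow> (if i = j then 1 else 0)
    | (Z, Z) \<Rightarrow> -2
    | _ \<Rightarrow> 0)"

definition ub :: "ix \<Rightarrow> vec" where
  "ub p = (\<lambda>q. if q = p then 1 else 0)"

definition mmul :: "nat \<Rightarrow> mat \<Rightarrow> mat \<Rightarrow> mat" where
  "mmul l X Y = (\<lambda>p q. \<Sum>r\<in>Jl l. X p r * Y r q)"

definition comm :: "nat \<Rightarrow> mat \<Rightarrow> mat \<Rightarrow> mat" where
  "comm l X Y = (\<lambda>p q. mmul l X Y p q - mmul l Y X p q)"

definition mlin :: "complex \<Rightarrow> mat \<Rightarrow> complex \<Rightarrow> mat \<Rightarrow> mat" where
  "mlin a X b Y = (\<lambda>p q. a * X p q + b * Y p q)"

text \<open>Normalized invariant form: (x,y) = tr(xy)/2 in the vector representation,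
  so that long roots have squared length 2.\<close>
definition nform :: "nat \<Rightarrow> mat \<Rightarrow> mat \<Rightarrow> complex" where
  "nform l X Y = (\<Sum>p\<in>Jl l. mmul l X Y p p) / 2"

definition gB :: "nat \<Rightarrow> mat set" where
  "gB l = {X. (\<forall>p q. (p \<notin> Jl l \<or> q \<notin> Jl l) \<longrightarrow> X p q = 0) \<and>
     (\<forall>p\<in>Jl l. \<forall>q\<in>Jl l. (\<Sum>r\<in>Jl l. X r p * Bm r q) + (\<Sum>r\<in>Jl l. Bm p r * X r q) = 0)}"

definition wedge :: "nat \<Rightarrow> vec \<Rightarrow> vec \<Rightarrow> mat" where
  "wedge l x y = (\<lambda>p q. x p * (\<Sum>r\<in>Jl l. y r * Bm r q) - y p * (\<Sum>r\<in>Jl l. x r * Bm r q))"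

abbreviation av :: "nat \<Rightarrow> vec" where "av i \<equiv> ub (P i)"
abbreviation asv :: "nat \<Rightarrow> vec" where "asv i \<equiv> ub (M i)"
abbreviation e0 :: vec where "e0 \<equiv> ub Z"

text \<open>Root vectors (i < j).\<close>
definition e_minus :: "nat \<Rightarrow> nat \<Rightarrow> nat \<Rightarrow> mat" where "e_minus l i j = wedge l (av i) (asv j)"
definition e_plus  :: "nat \<Rightarrow> nat \<Rightarrow> nat \<Rightarrow> mat" where "e_plus l i j = wedge l (av i) (av j)"
definition f_minus :: "nat \<Rightarrow> nat \<Rightarrow> nat \<Rightarrow> mat" where "f_minus l i j = wedge l (av j) (asv i)"
definition f_plus  :: "nat \<Rightarrow> nat \<Rightarrow> nat \<Rightarrow> mat" where "f_plus l i j = wedge l (asv j) (asv i)"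
definition e_short :: "nat \<Rightarrow> nat \<Rightarrow> mat" where "e_short l i = wedge l e0 (av i)"
definition f_short :: "nat \<Rightarrow> nat \<Rightarrow> mat" where "f_short l i = wedge l e0 (asv i)"
definition h_short :: "nat \<Rightarrow> nat \<Rightarrow> mat" where "h_short l i = comm l (e_short l i) (f_short l i)"

text \<open>Positive roots of D_l, as triples (sign, i, j) with i < j.\<close>
definition posD :: "nat \<Rightarrow> (bool \<times> nat \<times> nat) set" where
  "posD l = {(s, i, j). 1 \<le> i \<and> i < j \<and> j \<le> l}"

definition e_root :: "nat \<Rightarrow> bool \<times> nat \<times> nat \<Rightarrow> mat" where
  "e_root l r = (case r of (s, i, j) \<Rightarrow> if s then e_plus l i j else e_minus l i j)"
definition f_root :: "nat \<Rightarrow> bool \<times> nat \<times> nat \<Rightarrow> mat" where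
  "f_root l r = (case r of (s, i, j) \<Rightarrow> if s then f_plus l i j else f_minus l i j)"

text \<open>A module V (with scalar multiplication sm) for the affine algebra
  \<^emph>\<open>hat g_{B_l}\<close> extended by the degree derivation D, on which c acts by k,
  which contains a vacuum vector vac annihilated by g tensor C[t] and which is
  irreducible.  Any such module is isomorphic to L_{B_l}(k,0) with vac the
  image of the vacuum vector, and conversely L_{B_l}(k,0) is one.\<close>
definition is_simple_vacuum_module ::
  "nat \<Rightarrow> complex \<Rightarrow> (complex \<Rightarrow> 'v::ab_group_add \<Rightarrow> 'v) \<Rightarrow>
   (mat \<Rightarrow> int \<Rightarrow> 'v \<Rightarrow> 'v) \<Rightarrow> ('v \<Rightarrow> 'v) \<Rightarrow> 'v \<Rightarrow> bool" where
  "is_simple_vacuum_module l k sm \<rho> D vac \<longleftrightarrow>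
     module sm \<and>
     (\<forall>X\<in>gB l. \<forall>n v w. \<rho> X n (v + w) = \<rho> X n v + \<rho> X n w) \<and>
     (\<forall>X\<in>gB l. \<forall>n c v. \<rho> X n (sm c v) = sm c (\<rho> X n v)) \<and>
     (\<forall>X\<in>gB l. \<forall>Y\<in>gB l. \<forall>a b n v.
        \<rho> (mlin a X b Y) n v = sm a (\<rho> X n v) + sm b (\<rho> Y n v)) \<and>
     (\<forall>X\<in>gB l. \<forall>Y\<in>gB l. \<forall>m n v.
        \<rho> X m (\<rho> Y n v) - \<rho> Y n (\<rho> X m v) =
        \<rho> (comm l X Y) (m + n) v +
        sm (if m + n = 0 then of_int m * k * nform l X Y else 0) v) \<and>
     (\<forall>v w. D (v + w) = D v + D w) \<and>
     (\<forall>c v. D (sm c v) = sm c (D v)) \<and>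
     (\<forall>X\<in>gB l. \<forall>n v. D (\<rho> X n v) = \<rho> X n (D v) - sm (of_int n) (\<rho> X n v)) \<and>
     vac \<noteq> 0 \<and> D vac = 0 \<and>
     (\<forall>X\<in>gB l. \<forall>n \<ge> 0. \<rho> X n vac = 0) \<and>
     (\<forall>W. 0 \<in> W \<and> (\<forall>v\<in>W. \<forall>w\<in>W. v + w \<in> W) \<and> (\<forall>c. \<forall>v\<in>W. sm c v \<in> W) \<and>
          (\<forall>X\<in>gB l. \<forall>n. \<forall>v\<in>W. \<rho> X n v \<in> W) \<and> (\<forall>v\<in>W. D v \<in> W) \<and>
          W \<noteq> {0} \<longrightarrow> W = UNIV)"

end

theory Submission
  imports Defs
begin

(* Let R be the difference of the two sides; R has degree 2.  We show that R is a singular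
   vector, i.e. X(n) R = 0 for all X in g_{B_l} and n > 0, and that in a simple vacuum module
   every singular vector of positive degree is zero (it would generate the whole module, which
   contains the vacuum of degree 0).  For n >= 3 the vanishing is automatic, for n = 2 it follows
   from invariance of the form, and for n = 1 one has X(1) Y(-1) E(-1) 1 = act1 X Y E (-1) 1 with
   act1 X Y E = [[X,Y],E] + k (X,E) Y + k (X,Y) E.  Summing over the root vectors gives a
   Casimir-type matrix identity, which we verify entrywise in the realisation of g_{B_l} as
   so(2l+1): every sum is a combination of the A-part, the g_{D_l}-part and the Cartan part of X,
   and the combination vanishes exactly when k = -l + 3/2. *)

section \<open>The orthogonal form and its index combinatorics\<close>

(* The form Bm pairs every index with exactly one partner: P i with
  M i and Z with itself. *)

definition dual :: "ix \<Rightarrow> ix" where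
  "dual p = (case p of Z \<Rightarrow> Z | P i \<Rightarrow> M i | M i \<Rightarrow> P i)"

definition bf :: "ix \<Rightarrow> complex" where
  "bf p = (case p of Z \<Rightarrow> -2 | _ \<Rightarrow> 1)"

lemma dual_simps [simp]: "dual Z = Z" "dual (P i) = M i" "dual (M i) = P i"
  by (simp_all add: dual_def)

lemma bf_simps [simp]: "bf Z = -2" "bf (P i) = 1" "bf (M i) = 1"
  by (simp_all add: bf_def)

lemma dual_dual [simp]: "dual (dual p) = p"
  by (cases p) auto

lemma bf_dual [simp]: "bf (dual p) = bf p"
  by (cases p) auto

lemma dual_eq: "dual p = q \<longleftrightarrow> p = dual q"
  by (cases p; cases q) auto

lemma Bm_eq: "Bm p q = (if q = dual p then bf p else 0)"
  by (cases p; cases q) (auto simp: Bm_def)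

lemma Bm_sym: "Bm p q = Bm q p"
  by (auto simp: Bm_def split: ix.split)

lemma Jl_mem [simp]:
  "Z \<in> Jl l" "P i \<in> Jl l \<longleftrightarrow> 1 \<le> i \<and> i \<le> l" "M i \<in> Jl l \<longleftrightarrow> 1 \<le> i \<and> i \<le> l"
  by (auto simp: Jl_def)

lemma dual_Jl [simp]: "dual p \<in> Jl l \<longleftrightarrow> p \<in> Jl l"
  by (cases p) auto

lemma finite_Jl [simp]: "finite (Jl l)"
  by (simp add: Jl_def)

lemma sum_Jl_dual: "(\<Sum>r\<in>Jl l. g r) = (\<Sum>r\<in>Jl l. g (dual r))"
  by (rule sum.reindex_bij_witness[of _ dual dual]) auto

(* Scalars that vanish outside a condition; used to let sum.delta fire. *)
lemma mult_if_zero: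
  "(if c then x else 0) * (z::complex) = (if c then x * z else 0)"
  "(z::complex) * (if c then x else 0) = (if c then z * x else 0)"
  by simp_all

lemma sum_Bm:
  assumes "t \<in> Jl l"
  shows "(\<Sum>r\<in>Jl l. Bm t r * g r) = bf t * g (dual t)"
    and "(\<Sum>r\<in>Jl l. Bm r t * g r) = bf t * g (dual t)"
    and "(\<Sum>r\<in>Jl l. g r * Bm t r) = g (dual t) * bf t"
    and "(\<Sum>r\<in>Jl l. g r * Bm r t) = g (dual t) * bf t"
proof -
  have *: "(\<Sum>r\<in>Jl l. Bm t r * g r) = bf t * g (dual t)" for g
    using assms by (simp add: Bm_eq[of t] mult_if_zero sum.delta)
  show "(\<Sum>r\<in>Jl l. Bm t r * g r) = bf t * g (dual t)" by (rule *)
  show "(\<Sum>r\<in>Jl l. Bm r t * g r) = bf t * g (dual t)" using * by (simp add: Bm_sym[of _ t])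
  show "(\<Sum>r\<in>Jl l. g r * Bm t r) = g (dual t) * bf t" using * by (simp add: mult.commute)
  show "(\<Sum>r\<in>Jl l. g r * Bm r t) = g (dual t) * bf t"
    using * by (simp add: Bm_sym[of _ t] mult.commute)
qed

definition supp :: "nat \<Rightarrow> mat \<Rightarrow> bool" where
  "supp l C \<longleftrightarrow> (\<forall>p q. (p \<notin> Jl l \<or> q \<notin> Jl l) \<longrightarrow> C p q = 0)"

lemma supp_outside:
  assumes "supp l X" and "\<not> (1 \<le> i \<and> i \<le> l)"
  shows "X p (P i) = 0" "X p (M i) = 0" "X (P i) q = 0" "X (M i) q = 0"
  using assms by (auto simp: supp_def)

lemma supp_comm: "supp l C \<Longrightarrow> supp l E \<Longrightarrow> supp l (comm l C E)"
  by (auto simp: supp_def comm_def mmul_def)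

abbreviation W :: "nat \<Rightarrow> ix \<Rightarrow> ix \<Rightarrow> mat" where
  "W l s t \<equiv> wedge l (ub s) (ub t)"

lemma W_entry:
  assumes "s \<in> Jl l" "t \<in> Jl l"
  shows "W l s t p q = (if p = s then Bm t q else 0) - (if p = t then Bm s q else 0)"
proof -
  have "(\<Sum>r\<in>Jl l. ub u r * Bm r q) = Bm u q" if "u \<in> Jl l" for u
    using that by (simp add: ub_def mult_if_zero sum.delta)
  then show ?thesis
    using assms by (simp add: wedge_def) (simp add: ub_def)
qed

lemma supp_W: "s \<in> Jl l \<Longrightarrow> t \<in> Jl l \<Longrightarrow> supp l (W l s t)"
  by (auto simp: supp_def W_entry Bm_eq)

lemma comm_W:
  assumes "supp l C" "s \<in> Jl l" "t \<in> Jl l"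
  shows "comm l C (W l s t) p q = C p s * Bm t q - C p t * Bm s q
     - (if p = s then bf t * C (dual t) q else 0) + (if p = t then bf s * C (dual s) q else 0)"
proof -
  have "mmul l C (W l s t) p q = C p s * Bm t q - C p t * Bm s q"
    using assms by (simp add: mmul_def W_entry right_diff_distrib sum_subtractf mult_if_zero sum.delta)
  moreover have "mmul l (W l s t) C p q = (if p = s then bf t * C (dual t) q else 0)
      - (if p = t then bf s * C (dual s) q else 0)"
    using assms by (simp add: mmul_def W_entry left_diff_distrib sum_subtractf sum_Bm)
  ultimately show ?thesis by (simp add: comm_def)
qed

lemma gB_iff:
  "X \<in> gB l \<longleftrightarrow> supp l X \<and>
     (\<forall>p\<in>Jl l. \<forall>q\<in>Jl l. bf q * X (dual q) p + bf p * X (dual p) q = 0)"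
proof -
  have "(\<Sum>r\<in>Jl l. X r p * Bm r q) + (\<Sum>r\<in>Jl l. Bm p r * X r q)
      = bf q * X (dual q) p + bf p * X (dual p) q" if "p \<in> Jl l" "q \<in> Jl l" for p q
    using that by (simp add: sum_Bm mult.commute)
  then show ?thesis by (auto simp: gB_def supp_def)
qed

lemma gB_supp: "X \<in> gB l \<Longrightarrow> supp l X"
  by (simp add: gB_iff)

lemma gB_rel:
  assumes "X \<in> gB l" "p \<in> Jl l" "q \<in> Jl l"
  shows "bf q * X (dual q) p = - (bf p * X (dual p) q)"
proof -
  have "bf q * X (dual q) p + bf p * X (dual p) q = 0"
    using assms unfolding gB_iff by blast
  then show ?thesis by (simp add: add_eq_0_iff)
qed

lemma gB_special_entries:
  assumes X: "X \<in> gB l"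
  shows "X Z Z = 0"
    and "1 \<le> i \<Longrightarrow> i \<le> l \<Longrightarrow> X (M i) Z = 2 * X Z (P i)"
    and "1 \<le> i \<Longrightarrow> i \<le> l \<Longrightarrow> X (P i) Z = 2 * X Z (M i)"
    and "1 \<le> i \<Longrightarrow> i \<le> l \<Longrightarrow> X (M i) (P i) = 0"
    and "1 \<le> i \<Longrightarrow> i \<le> l \<Longrightarrow> X (P i) (M i) = 0"
    and "1 \<le> i \<Longrightarrow> i \<le> l \<Longrightarrow> 1 \<le> j \<Longrightarrow> j \<le> l \<Longrightarrow> X (M i) (M j) = - X (P j) (P i)"
  using gB_rel[OF X, of Z Z] gB_rel[OF X, of Z "P i"] gB_rel[OF X, of Z "M i"]
    gB_rel[OF X, of "P i" "P i"] gB_rel[OF X, of "M i" "M i"] gB_rel[OF X, of "M j" "P i"]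
  by auto

lemma gB_W: assumes "s \<in> Jl l" "t \<in> Jl l" shows "W l s t \<in> gB l"
  using assms by (auto simp: gB_iff supp_W W_entry Bm_eq dual_eq)

lemma gB_mlin: assumes X: "X \<in> gB l" and Y: "Y \<in> gB l" shows "mlin a X b Y \<in> gB l"
proof -
  have "supp l (mlin a X b Y)"
    using gB_supp[OF X] gB_supp[OF Y] by (simp add: supp_def mlin_def)
  moreover have "bf q * mlin a X b Y (dual q) p + bf p * mlin a X b Y (dual p) q = 0"
    if "p \<in> Jl l" "q \<in> Jl l" for p q
    using gB_rel[OF X that] gB_rel[OF Y that] by (simp add: mlin_def algebra_simps)
  ultimately show ?thesis by (simp add: gB_iff)
qed

lemma gB_add: "X \<in> gB l \<Longrightarrow> Y \<in> gB l \<Longrightarrow> (\<lambda>p q. X p q + Y p q) \<in> gB l"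
  using gB_mlin[of X l Y 1 1] by (simp add: mlin_def)

lemma gB_scale: "X \<in> gB l \<Longrightarrow> (\<lambda>p q. c * X p q) \<in> gB l"
  using gB_mlin[of X l X c 0] by (simp add: mlin_def)

lemma gB_zero: "(\<lambda>p q. 0) \<in> gB l"
  by (simp add: gB_def)

lemma gB_sum: "finite S \<Longrightarrow> (\<And>i. i \<in> S \<Longrightarrow> F i \<in> gB l) \<Longrightarrow> (\<lambda>p q. \<Sum>i\<in>S. F i p q) \<in> gB l"
  by (induction S rule: finite_induct) (simp_all add: gB_zero gB_add)

lemma gB_prod_rel:
  assumes X: "X \<in> gB l" and Y: "Y \<in> gB l" and p: "p \<in> Jl l" and q: "q \<in> Jl l"
  shows "bf q * mmul l X Y (dual q) p = bf p * mmul l Y X (dual p) q"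
proof -
  have "bf q * mmul l X Y (dual q) p = (\<Sum>r\<in>Jl l. (bf q * X (dual q) r) * Y r p)"
    by (simp add: mmul_def sum_distrib_left mult.assoc)
  also have "\<dots> = (\<Sum>r\<in>Jl l. - (bf r * X (dual r) q) * Y r p)"
  proof (rule sum.cong[OF refl])
    fix r assume "r \<in> Jl l"
    then show "bf q * X (dual q) r * Y r p = - (bf r * X (dual r) q) * Y r p"
      using gB_rel[OF X _ q] by simp
  qed
  also have "\<dots> = (\<Sum>r\<in>Jl l. - (bf r * X r q) * Y (dual r) p)"
    by (subst sum_Jl_dual) simp
  also have "\<dots> = (\<Sum>r\<in>Jl l. X r q * (bf p * Y (dual p) r))"
  proof (rule sum.cong[OF refl])
    fix r assume "r \<in> Jl l"
    then have "bf r * Y (dual r) p = - (bf p * Y (dual p) r)"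
      using gB_rel[OF Y p, of r] by simp
    moreover have "- (bf r * X r q) * Y (dual r) p = - (X r q * (bf r * Y (dual r) p))"
      by (simp add: algebra_simps)
    ultimately show "- (bf r * X r q) * Y (dual r) p = X r q * (bf p * Y (dual p) r)"
      by simp
  qed
  also have "\<dots> = bf p * mmul l Y X (dual p) q"
    by (simp add: mmul_def sum_distrib_left algebra_simps)
  finally show ?thesis .
qed

lemma gB_comm: assumes X: "X \<in> gB l" and Y: "Y \<in> gB l" shows "comm l X Y \<in> gB l"
  unfolding gB_iff
proof (intro conjI supp_comm gB_supp X Y ballI)
  fix p q assume pq: "p \<in> Jl l" "q \<in> Jl l"
  show "bf q * comm l X Y (dual q) p + bf p * comm l X Y (dual p) q = 0"
    using gB_prod_rel[OF X Y pq] gB_prod_rel[OF Y X pq] by (simp add: comm_def algebra_simps)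
qed

lemma gB_short:
  assumes "1 \<le> i" "i \<le> l"
  shows "e_short l i \<in> gB l" "f_short l i \<in> gB l" "h_short l i \<in> gB l"
  using assms by (auto simp: e_short_def f_short_def h_short_def intro!: gB_W gB_comm)

lemma gB_root: "r \<in> posD l \<Longrightarrow> e_root l r \<in> gB l" "r \<in> posD l \<Longrightarrow> f_root l r \<in> gB l"
  by (auto simp: posD_def e_root_def f_root_def e_plus_def e_minus_def f_plus_def f_minus_def
      intro!: gB_W)

lemma h_short_eq: "1 \<le> i \<Longrightarrow> i \<le> l \<Longrightarrow> h_short l i = (\<lambda>p q. 2 * W l (P i) (M i) p q)"
  by (intro ext) (simp add: h_short_def e_short_def f_short_def comm_W supp_W W_entry Bm_eq)

lemma nform_W:
  assumes X: "X \<in> gB l" and "s \<in> Jl l" "t \<in> Jl l"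
  shows "nform l X (W l s t) = bf t * X (dual t) s"
proof -
  have "nform l X (W l s t) = (\<Sum>p\<in>Jl l. X p s * Bm t p - X p t * Bm s p) / 2"
    using assms by (simp add: nform_def mmul_def W_entry right_diff_distrib sum_subtractf
        mult_if_zero sum.delta)
  also have "\<dots> = (X (dual t) s * bf t - X (dual s) t * bf s) / 2"
    using assms by (simp add: sum_subtractf sum_Bm)
  finally show ?thesis
    using gB_rel[OF assms] by (simp add: mult.commute)
qed

lemma trace_cyclic:
  "(\<Sum>p\<in>Jl l. mmul l (mmul l A B) C p p) = (\<Sum>p\<in>Jl l. mmul l (mmul l C A) B p p)"
proof -
  have "(\<Sum>p\<in>Jl l. mmul l (mmul l A B) C p p)
      = (\<Sum>p\<in>Jl l. \<Sum>r\<in>Jl l. \<Sum>s\<in>Jl l. A p s * B s r * C r p)"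
    by (simp add: mmul_def sum_distrib_right)
  also have "\<dots> = (\<Sum>r\<in>Jl l. \<Sum>p\<in>Jl l. \<Sum>s\<in>Jl l. C r p * A p s * B s r)"
    by (subst sum.swap) (simp add: mult_ac)
  also have "\<dots> = (\<Sum>r\<in>Jl l. \<Sum>s\<in>Jl l. \<Sum>p\<in>Jl l. C r p * A p s * B s r)"
    by (intro sum.cong refl sum.swap)
  also have "\<dots> = (\<Sum>p\<in>Jl l. mmul l (mmul l C A) B p p)"
    by (simp add: mmul_def sum_distrib_right sum_distrib_left)
  finally show ?thesis .
qed

lemma nform_invariant: "nform l (comm l X Y) E + nform l (comm l X E) Y = 0"
proof -
  have tr: "(\<Sum>p\<in>Jl l. mmul l (comm l A B) C p p)
      = (\<Sum>p\<in>Jl l. mmul l (mmul l A B) C p p) - (\<Sum>p\<in>Jl l. mmul l (mmul l B A) C p p)" for A B C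
    by (simp add: comm_def mmul_def sum_subtractf left_diff_distrib)
  show ?thesis unfolding nform_def tr
    using trace_cyclic[of l X Y E] trace_cyclic[of l Y X E] trace_cyclic[of l X E Y]
      trace_cyclic[of l E X Y] trace_cyclic[of l E Y X]
    by (simp add: field_simps)
qed

lemma nform_comm_self: "nform l (comm l X Y) Y = 0"
  using nform_invariant[of l X Y Y] by simp

section \<open>Entrywise evaluation of the Casimir-type sums\<close>

(* The decomposition g_{B_l} = A + g_{D_l} and the Cartan part: entries in the row or column
   of Z, entries off that row and column, and the diagonal entries off Z. *)
definition partA :: "mat \<Rightarrow> mat" where
  "partA X p q = (if p = Z \<or> q = Z then X p q else 0)"

definition partD :: "mat \<Rightarrow> mat" where
  "partD X p q = (if p \<noteq> Z \<and> q \<noteq> Z then X p q else 0)"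

definition partH :: "mat \<Rightarrow> mat" where
  "partH X p q = (if p \<noteq> Z \<and> p = q then X p q else 0)"

lemma gB_rel_around:
  assumes X: "X \<in> gB l" and "p \<in> Jl l" "q \<in> Jl l"
  shows "bf q * X (dual q) p = - (bf p * X (dual p) q)"
    and "bf q * X q (dual p) = - (bf p * X p (dual q))"
    and "bf q * X (dual q) (dual p) = - (bf p * X p q)"
    and "bf q * X q p = - (bf p * X (dual p) (dual q))"
  using gB_rel[OF X, of p q] gB_rel[OF X, of "dual p" "dual q"]
    gB_rel[OF X, of "dual p" q] gB_rel[OF X, of p "dual q"] assms by simp_all

lemma if_zero_simps:
  "(if c then 0 * (x::complex) else 0) = 0" "(if c then (x::complex) * 0 else 0) = 0"
  "(\<Sum>j\<in>S. if c then g j else 0) = (if c then (\<Sum>j\<in>S. g j) else 0)"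
  by simp_all

lemmas entry_simps = e_short_def f_short_def nform_W W_entry Bm_eq comm_W supp_W supp_comm
   gB_supp mult_if_zero sum.distrib sum.delta sum.delta' sum_subtractf
   partA_def partD_def partH_def if_zero_simps sum_negf algebra_simps

lemma short_form_sum: assumes X: "X \<in> gB l"
  shows "(\<Sum>i\<in>{1..l}. nform l X (f_short l i) * e_short l i p q + nform l X (e_short l i) * f_short l i p q)
     = 2 * partA X p q"
  using X gB_special_entries[OF X] gB_rel_around[OF X, of p q]
  by (cases p; cases q) (auto simp: entry_simps supp_outside[OF gB_supp[OF X]])

lemma short_bracket_sum: assumes X: "X \<in> gB l"
  shows "(\<Sum>i\<in>{1..l}. comm l (comm l X (e_short l i)) (f_short l i) p q + comm l (comm l X (f_short l i)) (e_short l i) p q)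
     = 2 * (2 * of_nat l - 1) * partA X p q + 4 * partD X p q"
  using X gB_special_entries[OF X] gB_rel_around[OF X, of p q]
  by (cases p; cases q) (auto simp: entry_simps supp_outside[OF gB_supp[OF X]])

definition long_form_term :: "nat \<Rightarrow> mat \<Rightarrow> nat \<Rightarrow> nat \<Rightarrow> ix \<Rightarrow> ix \<Rightarrow> complex" where
  "long_form_term l X i j p q = nform l X (f_plus l i j) * e_plus l i j p q + nform l X (e_plus l i j) * f_plus l i j p q
     + (nform l X (f_minus l i j) * e_minus l i j p q + nform l X (e_minus l i j) * f_minus l i j p q)"

definition long_bracket_term :: "nat \<Rightarrow> mat \<Rightarrow> nat \<Rightarrow> nat \<Rightarrow> ix \<Rightarrow> ix \<Rightarrow> complex" where
  "long_bracket_term l X i j p q = comm l (comm l X (e_plus l i j)) (f_plus l i j) p q + comm l (comm l X (f_plus l i j)) (e_plus l i j) p q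
     + (comm l (comm l X (e_minus l i j)) (f_minus l i j) p q + comm l (comm l X (f_minus l i j)) (e_minus l i j) p q)"

lemmas root_simps = e_plus_def e_minus_def f_plus_def f_minus_def long_form_term_def long_bracket_term_def

lemma long_form_full_sum: assumes X: "X \<in> gB l"
  shows "(\<Sum>i\<in>{1..l}. \<Sum>j\<in>{1..l}. long_form_term l X i j p q) = 2 * partD X p q"
  using X gB_special_entries[OF X] gB_rel_around[OF X, of p q]
  by (cases p; cases q) (auto simp: root_simps entry_simps supp_outside[OF gB_supp[OF X]])

lemma long_form_diag_sum: assumes X: "X \<in> gB l"
  shows "(\<Sum>i\<in>{1..l}. long_form_term l X i i p q) = 2 * partH X p q"
  using X gB_special_entries[OF X] gB_rel_around[OF X, of p q]
  by (cases p; cases q) (auto simp: root_simps entry_simps supp_outside[OF gB_supp[OF X]])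

lemma long_bracket_full_sum: assumes X: "X \<in> gB l"
  shows "(\<Sum>i\<in>{1..l}. \<Sum>j\<in>{1..l}. long_bracket_term l X i j p q) = (4 * of_nat l - 2) * partA X p q + (8 * of_nat l - 8) * partD X p q"
  using X gB_special_entries[OF X] gB_rel_around[OF X, of p q]
  by (cases p; cases q) (auto simp: root_simps entry_simps supp_outside[OF gB_supp[OF X]])

lemma long_bracket_diag_sum: assumes X: "X \<in> gB l"
  shows "(\<Sum>i\<in>{1..l}. long_bracket_term l X i i p q) = 2 * partA X p q + 4 * partD X p q - 4 * partH X p q"
  using X gB_special_entries[OF X] gB_rel_around[OF X, of p q]
  by (cases p; cases q) (auto simp: root_simps entry_simps supp_outside[OF gB_supp[OF X]])

lemma cartan_form_sum: assumes X: "X \<in> gB l"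
  shows "(\<Sum>i\<in>{1..l}. nform l X (W l (P i) (M i)) * W l (P i) (M i) p q) = partH X p q"
  using X gB_special_entries[OF X] gB_rel_around[OF X, of p q]
  by (cases p; cases q) (auto simp: entry_simps supp_outside[OF gB_supp[OF X]])

lemma cartan_bracket_sum: assumes X: "X \<in> gB l"
  shows "(\<Sum>i\<in>{1..l}. comm l (comm l X (W l (P i) (M i))) (W l (P i) (M i)) p q)
     = partA X p q + 2 * partD X p q - 2 * partH X p q"
  using X gB_special_entries[OF X] gB_rel_around[OF X, of p q]
  by (cases p; cases q) (auto simp: entry_simps supp_outside[OF gB_supp[OF X]])

section \<open>The Casimir relation at level -l + 3/2\<close>

lemma sum_posD:
  "(\<Sum>r\<in>posD l. F r) = (\<Sum>i\<in>{1..l}. \<Sum>j\<in>{Suc i..l}. F (True, i, j) + F (False, i, j))"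
proof -
  define S where "S = {(i, j). 1 \<le> i \<and> i < j \<and> j \<le> l}"
  have "finite S"
    unfolding S_def by (rule finite_subset[of _ "{1..l} \<times> {1..l}"]) auto
  have "posD l = UNIV \<times> S" by (auto simp: posD_def S_def)
  then have "(\<Sum>r\<in>posD l. F r) = (\<Sum>s\<in>UNIV. \<Sum>ij\<in>S. F (s, ij))"
    using \<open>finite S\<close> by (simp add: sum.cartesian_product)
  also have "\<dots> = (\<Sum>ij\<in>S. F (True, ij) + F (False, ij))"
    by (simp add: UNIV_bool sum.distrib add.commute)
  also have "S = Sigma {1..l} (\<lambda>i. {Suc i..l})" by (auto simp: S_def)
  finally show ?thesis by (simp add: sum.Sigma)
qed

lemma sum_upper_triangle:
  fixes G :: "nat \<Rightarrow> nat \<Rightarrow> 'a::field_char_0"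
  assumes sym: "\<And>i j. G i j = G j i"
  shows "(\<Sum>i\<in>{1..l}. \<Sum>j\<in>{Suc i..l}. G i j)
       = ((\<Sum>i\<in>{1..l}. \<Sum>j\<in>{1..l}. G i j) - (\<Sum>i\<in>{1..l}. G i i)) / 2"
proof -
  have "2 * (\<Sum>i\<in>{1..l}. \<Sum>j\<in>{Suc i..l}. G i j) + (\<Sum>i\<in>{1..l}. G i i)
      = (\<Sum>i\<in>{1..l}. \<Sum>j\<in>{1..l}. G i j)"
  proof (induction l)
    case 0
    then show ?case by simp
  next
    case (Suc l)
    have upper: "(\<Sum>i\<in>{1..Suc l}. \<Sum>j\<in>{Suc i..Suc l}. G i j)
        = (\<Sum>i\<in>{1..l}. \<Sum>j\<in>{Suc i..l}. G i j) + (\<Sum>i\<in>{1..l}. G i (Suc l))"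
    proof -
      have "(\<Sum>i\<in>{1..Suc l}. \<Sum>j\<in>{Suc i..Suc l}. G i j)
          = (\<Sum>i\<in>{1..l}. \<Sum>j\<in>{Suc i..Suc l}. G i j)"
        by (simp add: sum.atLeast_Suc_atMost_Suc_shift)
      also have "\<dots> = (\<Sum>i\<in>{1..l}. (\<Sum>j\<in>{Suc i..l}. G i j) + G i (Suc l))"
        by (intro sum.cong) auto
      finally show ?thesis by (simp add: sum.distrib)
    qed
    have full: "(\<Sum>i\<in>{1..Suc l}. \<Sum>j\<in>{1..Suc l}. G i j)
        = (\<Sum>i\<in>{1..l}. \<Sum>j\<in>{1..l}. G i j) + 2 * (\<Sum>i\<in>{1..l}. G i (Suc l)) + G (Suc l) (Suc l)"
      using sym by (simp add: sum.distrib algebra_simps)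
    show ?case using Suc.IH upper full by (simp add: algebra_simps)
  qed
  then show ?thesis by (simp add: field_simps)
qed

lemma wedge_swap: "wedge l y x = (\<lambda>p q. - wedge l x y p q)"
  by (simp add: wedge_def)

lemma root_swap:
  "e_plus l j i = (\<lambda>p q. - e_plus l i j p q)" "f_plus l j i = (\<lambda>p q. - f_plus l i j p q)"
  "e_minus l j i = f_minus l i j" "f_minus l j i = e_minus l i j"
  by (simp_all add: e_plus_def f_plus_def e_minus_def f_minus_def
      wedge_swap[of l "ub (P j)"] wedge_swap[of l "ub (M j)"])

lemma nform_scale: "nform l X (\<lambda>p q. c * E p q) = c * nform l X E"
  by (simp add: nform_def mmul_def sum_distrib_left algebra_simps)

lemma comm_scale:
  "comm l C (\<lambda>p q. c * E p q) = (\<lambda>p q. c * comm l C E p q)"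
  "comm l (\<lambda>p q. c * E p q) C = (\<lambda>p q. c * comm l E C p q)"
  by (simp_all add: comm_def mmul_def sum_distrib_left algebra_simps)

lemma nform_neg: "nform l X (\<lambda>p q. - E p q) = - nform l X E"
  using nform_scale[of l X "-1" E] by simp

lemma comm_neg:
  "comm l C (\<lambda>p q. - E p q) = (\<lambda>p q. - comm l C E p q)"
  "comm l (\<lambda>p q. - E p q) C = (\<lambda>p q. - comm l E C p q)"
  using comm_scale[where c = "-1"] by simp_all

lemma long_form_term_sym: "long_form_term l X i j p q = long_form_term l X j i p q"
  unfolding long_form_term_def root_swap[of l j i] by (simp add: nform_neg algebra_simps)

lemma long_bracket_term_sym: "long_bracket_term l X i j p q = long_bracket_term l X j i p q"
  unfolding long_bracket_term_def root_swap[of l j i] by (simp add: comm_neg algebra_simps)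

(* The matrix whose (-1)-mode on the vacuum is X(1) Y(-1) E(-1) 1 (lemma mode1_quad). *)
definition act1 :: "nat \<Rightarrow> complex \<Rightarrow> mat \<Rightarrow> mat \<Rightarrow> mat \<Rightarrow> mat" where
  "act1 l k X Y E = (\<lambda>p q. comm l (comm l X Y) E p q + (k * nform l X E * Y p q + k * nform l X Y * E p q))"

lemma gB_act1: "X \<in> gB l \<Longrightarrow> Y \<in> gB l \<Longrightarrow> E \<in> gB l \<Longrightarrow> act1 l k X Y E \<in> gB l"
  unfolding act1_def by (intro gB_add gB_comm gB_scale)

lemma act1_pair: "act1 l k X Y E p q + act1 l k X E Y p q =
   (comm l (comm l X Y) E p q + comm l (comm l X E) Y p q) + 2 * k * (nform l X E * Y p q + nform l X Y * E p q)"
  by (simp add: act1_def algebra_simps)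

lemma act1_short_sum: assumes X: "X \<in> gB l"
  shows "(\<Sum>i\<in>{1..l}. act1 l k X (e_short l i) (f_short l i) p q + act1 l k X (f_short l i) (e_short l i) p q)
     = (2 * (2 * of_nat l - 1) + 4 * k) * partA X p q + 4 * partD X p q"
  by (simp only: act1_pair sum.distrib sum_distrib_left[symmetric] short_form_sum[OF X, unfolded sum.distrib]
      short_bracket_sum[OF X, unfolded sum.distrib]) (simp add: algebra_simps)

lemma act1_long_sum: assumes X: "X \<in> gB l"
  shows "(\<Sum>r\<in>posD l. act1 l k X (e_root l r) (f_root l r) p q + act1 l k X (f_root l r) (e_root l r) p q)
     = (2 * of_nat l - 2) * partA X p q + (4 * of_nat l - 6 + 2 * k) * partD X p q + (2 - 2 * k) * partH X p q"
proof -
  have pair: "act1 l k X (e_root l (True, i, j)) (f_root l (True, i, j)) p q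
      + act1 l k X (f_root l (True, i, j)) (e_root l (True, i, j)) p q
      + (act1 l k X (e_root l (False, i, j)) (f_root l (False, i, j)) p q
        + act1 l k X (f_root l (False, i, j)) (e_root l (False, i, j)) p q)
     = long_bracket_term l X i j p q + 2 * k * long_form_term l X i j p q" for i j
    by (simp add: act1_pair long_form_term_def long_bracket_term_def e_root_def f_root_def algebra_simps)
  have "(\<Sum>r\<in>posD l. act1 l k X (e_root l r) (f_root l r) p q + act1 l k X (f_root l r) (e_root l r) p q)
     = (\<Sum>i\<in>{1..l}. \<Sum>j\<in>{Suc i..l}. long_bracket_term l X i j p q + 2 * k * long_form_term l X i j p q)"
    by (simp only: sum_posD pair)
  also have "\<dots> = ((\<Sum>i\<in>{1..l}. \<Sum>j\<in>{1..l}. long_bracket_term l X i j p q + 2 * k * long_form_term l X i j p q)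
      - (\<Sum>i\<in>{1..l}. long_bracket_term l X i i p q + 2 * k * long_form_term l X i i p q)) / 2"
    by (rule sum_upper_triangle) (simp add: long_form_term_sym[of l X] long_bracket_term_sym[of l X])
  also have "\<dots> = (2 * of_nat l - 2) * partA X p q + (4 * of_nat l - 6 + 2 * k) * partD X p q
      + (2 - 2 * k) * partH X p q"
    by (simp only: sum.distrib sum_distrib_left[symmetric] long_form_full_sum[OF X] long_bracket_full_sum[OF X]
        long_form_diag_sum[OF X] long_bracket_diag_sum[OF X]) (simp add: field_simps)
  finally show ?thesis .
qed

lemma act1_cartan_sum: assumes X: "X \<in> gB l"
  shows "(\<Sum>i\<in>{1..l}. act1 l k X (h_short l i) (h_short l i) p q)
     = 4 * partA X p q + 8 * partD X p q + (8 * k - 8) * partH X p q"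
proof -
  have "(\<Sum>i\<in>{1..l}. act1 l k X (h_short l i) (h_short l i) p q)
      = (\<Sum>i\<in>{1..l}. 4 * comm l (comm l X (W l (P i) (M i))) (W l (P i) (M i)) p q
          + 8 * k * (nform l X (W l (P i) (M i)) * W l (P i) (M i) p q))"
    by (intro sum.cong refl)
      (simp add: act1_def h_short_eq nform_scale comm_scale algebra_simps)
  also have "\<dots> = 4 * partA X p q + 8 * partD X p q + (8 * k - 8) * partH X p q"
    by (simp only: sum.distrib sum_distrib_left[symmetric] cartan_form_sum[OF X] cartan_bracket_sum[OF X]) (simp add: algebra_simps)
  finally show ?thesis .
qed

(* The matrix identity behind the first modes; it holds exactly because k = -l + 3/2. *)
lemma casimir_relation:
  assumes X: "X \<in> gB l" and k: "k = - of_nat l + 3/2"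
  shows "(2 * of_nat l - 1) * (\<Sum>i\<in>{1..l}. act1 l k X (e_short l i) (f_short l i) p q
            + act1 l k X (f_short l i) (e_short l i) p q)
    = 4 * (\<Sum>r\<in>posD l. act1 l k X (e_root l r) (f_root l r) p q + act1 l k X (f_root l r) (e_root l r) p q)
       + (\<Sum>i\<in>{1..l}. act1 l k X (h_short l i) (h_short l i) p q)"
  unfolding act1_short_sum[OF X] act1_long_sum[OF X] act1_cartan_sum[OF X] k by (simp add: algebra_simps)

section \<open>Simple vacuum modules and their singular vectors\<close>

lemma (in module) hom_span_into:
  assumes f: "module_hom scale scale f" and ST: "\<And>x. x \<in> S \<Longrightarrow> f x \<in> span T"
    and u: "u \<in> span S"
  shows "f u \<in> span T"
proof -
  have "f u \<in> span (f ` S)"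
    using u module_hom.span_image[OF f, of S] by simp
  also have "span (f ` S) \<subseteq> span T"
    using ST by (metis image_subsetI span_minimal subspace_span)
  finally show ?thesis .
qed

locale simple_vacuum_module =
  fixes l :: nat and k :: complex and sm :: "complex \<Rightarrow> 'v::ab_group_add \<Rightarrow> 'v"
    and \<rho> :: "mat \<Rightarrow> int \<Rightarrow> 'v \<Rightarrow> 'v" and D :: "'v \<Rightarrow> 'v" and vac :: 'v
  assumes svm: "is_simple_vacuum_module l k sm \<rho> D vac"
begin

sublocale module sm
  using svm by (simp add: is_simple_vacuum_module_def)

lemma rho_hom: "X \<in> gB l \<Longrightarrow> module_hom sm sm (\<rho> X n)"
  using svm by (simp add: is_simple_vacuum_module_def module_hom_iff)

lemma rho_lin: "X \<in> gB l \<Longrightarrow> Y \<in> gB l \<Longrightarrow> \<rho> (mlin a X b Y) n v = sm a (\<rho> X n v) + sm b (\<rho> Y n v)"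
  using svm by (simp add: is_simple_vacuum_module_def)

lemma rho_comm: "X \<in> gB l \<Longrightarrow> Y \<in> gB l \<Longrightarrow> \<rho> X m (\<rho> Y n v) - \<rho> Y n (\<rho> X m v) =
    \<rho> (comm l X Y) (m + n) v + sm (if m + n = 0 then of_int m * k * nform l X Y else 0) v"
  using svm by (simp add: is_simple_vacuum_module_def)

lemma D_hom: "module_hom sm sm D"
  using svm by (simp add: is_simple_vacuum_module_def module_hom_iff)

lemmas rho_add = module_hom.add[OF rho_hom]
lemmas rho_sm = module_hom.scale[OF rho_hom]
lemmas rho_zero = module_hom.zero[OF rho_hom]
lemmas rho_diff = module_hom.diff[OF rho_hom]
lemmas rho_sum = module_hom.sum[OF rho_hom]

lemma D_rho: "X \<in> gB l \<Longrightarrow> D (\<rho> X n v) = \<rho> X n (D v) - sm (of_int n) (\<rho> X n v)"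
  using svm by (simp add: is_simple_vacuum_module_def)

lemmas D_add = module_hom.add[OF D_hom]
lemmas D_sm = module_hom.scale[OF D_hom]
lemmas D_diff = module_hom.diff[OF D_hom]
lemmas D_sum = module_hom.sum[OF D_hom]

lemma vac_nz: "vac \<noteq> 0" and D_vac: "D vac = 0"
  using svm by (simp_all add: is_simple_vacuum_module_def)

lemma vac_ann: "X \<in> gB l \<Longrightarrow> n \<ge> 0 \<Longrightarrow> \<rho> X n vac = 0"
  using svm by (simp add: is_simple_vacuum_module_def)

lemma simple_subspace:
  assumes "subspace U" "\<And>X n v. X \<in> gB l \<Longrightarrow> v \<in> U \<Longrightarrow> \<rho> X n v \<in> U"
    "\<And>v. v \<in> U \<Longrightarrow> D v \<in> U" "U \<noteq> {0}"
  shows "U = UNIV"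
proof -
  have H: "\<forall>W. 0 \<in> W \<and> (\<forall>v\<in>W. \<forall>w\<in>W. v + w \<in> W) \<and> (\<forall>c. \<forall>v\<in>W. sm c v \<in> W) \<and>
          (\<forall>X\<in>gB l. \<forall>n. \<forall>v\<in>W. \<rho> X n v \<in> W) \<and> (\<forall>v\<in>W. D v \<in> W) \<and>
          W \<noteq> {0} \<longrightarrow> W = UNIV"
    using svm unfolding is_simple_vacuum_module_def by (elim conjE)
  show ?thesis
  proof (rule H[rule_format], intro conjI ballI allI)
    show "0 \<in> U" "\<And>v w. v \<in> U \<Longrightarrow> w \<in> U \<Longrightarrow> v + w \<in> U" "\<And>c v. v \<in> U \<Longrightarrow> sm c v \<in> U"
      using \<open>subspace U\<close> by (auto simp: subspace_def)
  qed (use assms in auto)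
qed

lemma rho_scale_mat: "X \<in> gB l \<Longrightarrow> \<rho> (\<lambda>p q. c * X p q) n v = sm c (\<rho> X n v)"
  using rho_lin[of X X c 0 n v] by (simp add: mlin_def)

lemma rho_add_mat:
  "X \<in> gB l \<Longrightarrow> Y \<in> gB l \<Longrightarrow> \<rho> (\<lambda>p q. X p q + Y p q) n v = \<rho> X n v + \<rho> Y n v"
  using rho_lin[of X Y 1 1 n v] by (simp add: mlin_def)

lemma rho_diff_mat:
  "X \<in> gB l \<Longrightarrow> Y \<in> gB l \<Longrightarrow> \<rho> (\<lambda>p q. X p q - Y p q) n v = \<rho> X n v - \<rho> Y n v"
  using rho_lin[of X Y 1 "-1" n v] by (simp add: mlin_def)

lemma rho_zero_mat: "\<rho> (\<lambda>p q. 0) n v = 0"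
  using rho_lin[of "\<lambda>p q. 0" "\<lambda>p q. 0" 0 0 n v] by (simp add: mlin_def gB_zero)

lemma rho_sum_mat:
  "finite S \<Longrightarrow> (\<And>i. i \<in> S \<Longrightarrow> F i \<in> gB l) \<Longrightarrow>
   \<rho> (\<lambda>p q. \<Sum>i\<in>S. F i p q) n v = (\<Sum>i\<in>S. \<rho> (F i) n v)"
proof (induction S rule: finite_induct)
  case empty
  then show ?case by (simp add: rho_zero_mat)
next
  case (insert x S)
  then show ?case
    using rho_add_mat[of "F x" "\<lambda>p q. \<Sum>i\<in>S. F i p q" n v] gB_sum[of S F l] by simp
qed

lemma rho_swap:
  "X \<in> gB l \<Longrightarrow> Y \<in> gB l \<Longrightarrow> \<rho> X m (\<rho> Y n v) = \<rho> Y n (\<rho> X m v) + \<rho> (comm l X Y) (m + n) v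
     + sm (if m + n = 0 then of_int m * k * nform l X Y else 0) v"
  using rho_comm[of X Y m n v] by (simp add: diff_eq_eq ac_simps)

lemma mode_on_single:
  assumes X: "X \<in> gB l" and E: "E \<in> gB l" and m: "m \<ge> 0"
  shows "\<rho> X m (\<rho> E (-1) vac) =
    (if m = 0 then \<rho> (comm l X E) (-1) vac else if m = 1 then sm (k * nform l X E) vac else 0)"
  using rho_swap[OF X E, of m "-1" vac] vac_ann[OF X m] vac_ann[OF gB_comm[OF X E], of "m - 1"] m E
  by (auto simp: rho_zero)

definition quad :: "mat \<Rightarrow> mat \<Rightarrow> 'v" where
  "quad Y E = \<rho> Y (-1) (\<rho> E (-1) vac)"

lemma mode1_quad:
  assumes X: "X \<in> gB l" and Y: "Y \<in> gB l" and E: "E \<in> gB l"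
  shows "\<rho> X 1 (quad Y E) = \<rho> (act1 l k X Y E) (-1) vac"
proof -
  have XY: "comm l X Y \<in> gB l" by (rule gB_comm[OF X Y])
  have "\<rho> X 1 (quad Y E) = \<rho> Y (-1) (\<rho> X 1 (\<rho> E (-1) vac)) + \<rho> (comm l X Y) 0 (\<rho> E (-1) vac)
      + sm (k * nform l X Y) (\<rho> E (-1) vac)"
    unfolding quad_def using rho_swap[OF X Y, of 1 "-1"] by simp
  also have "\<dots> = \<rho> (comm l (comm l X Y) E) (-1) vac
      + (sm (k * nform l X E) (\<rho> Y (-1) vac) + sm (k * nform l X Y) (\<rho> E (-1) vac))"
    by (simp add: mode_on_single X E XY rho_sm[OF Y] ac_simps)
  also have "\<dots> = \<rho> (act1 l k X Y E) (-1) vac"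
    unfolding act1_def
    by (simp add: rho_add_mat rho_scale_mat gB_comm[OF XY E] gB_add gB_scale Y E)
  finally show ?thesis .
qed

lemma mode2_quad:
  assumes X: "X \<in> gB l" and Y: "Y \<in> gB l" and E: "E \<in> gB l"
  shows "\<rho> X 2 (quad Y E) = sm (k * nform l (comm l X Y) E) vac"
  unfolding quad_def using rho_swap[OF X Y, of 2 "-1"]
  by (simp add: mode_on_single X E gB_comm[OF X Y] rho_zero[OF Y])

lemma mode_high_quad:
  assumes X: "X \<in> gB l" and Y: "Y \<in> gB l" and E: "E \<in> gB l" and n: "n \<ge> 3"
  shows "\<rho> X n (quad Y E) = 0"
  unfolding quad_def using rho_swap[OF X Y, of n "-1"] n
  by (simp add: mode_on_single X E gB_comm[OF X Y] rho_zero[OF Y])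

(* By invariance of the form, the symmetrised quadratic vectors are killed by the second modes. *)
lemma mode2_quad_sym:
  assumes X: "X \<in> gB l" and Y: "Y \<in> gB l" and E: "E \<in> gB l"
  shows "\<rho> X 2 (quad Y E + quad E Y) = 0"
proof -
  have "\<rho> X 2 (quad Y E + quad E Y) = sm (k * (nform l (comm l X Y) E + nform l (comm l X E) Y)) vac"
    using assms by (simp add: rho_add mode2_quad distrib_left scale_left_distrib)
  then show ?thesis by (simp add: nform_invariant)
qed

lemma D_quad:
  assumes Y: "Y \<in> gB l" and E: "E \<in> gB l"
  shows "D (quad Y E) = sm 2 (quad Y E)"
proof -
  have "D (\<rho> E (-1) vac) = \<rho> E (-1) vac"
    using D_rho[OF E, of "-1" vac] by (simp add: D_vac rho_zero[OF E])
  then have "D (quad Y E) = quad Y E + quad Y E"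
    unfolding quad_def using D_rho[OF Y, of "-1" "\<rho> E (-1) vac"] by simp
  also have "\<dots> = sm 2 (quad Y E)"
    using scale_left_distrib[of 1 1 "quad Y E"] by simp
  finally show ?thesis .
qed

definition singular :: "'v \<Rightarrow> bool" where
  "singular w \<longleftrightarrow> (\<forall>X\<in>gB l. \<forall>n>0. \<rho> X n w = 0)"

inductive descendant :: "'v \<Rightarrow> 'v \<Rightarrow> bool" for w where
  self: "descendant w w"
| mode: "descendant w u \<Longrightarrow> X \<in> gB l \<Longrightarrow> n \<le> 0 \<Longrightarrow> descendant w (\<rho> X n u)"

definition generated :: "'v \<Rightarrow> 'v set" where
  "generated w = span {u. descendant w u}"

lemma descendant_generated: "descendant w u \<Longrightarrow> u \<in> generated w"
  unfolding generated_def by (rule span_base) simp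

lemma descendant_degree:
  assumes "D w = sm (of_int d) w" and "descendant w u"
  shows "\<exists>e\<ge>d. D u = sm (of_int e) u"
  using assms(2)
proof (induction rule: descendant.induct)
  case self
  then show ?case using assms(1) by blast
next
  case (mode u X n)
  then obtain e where e: "e \<ge> d" "D u = sm (of_int e) u" by blast
  have "D (\<rho> X n u) = sm (of_int (e - n)) (\<rho> X n u)"
    using mode e by (simp add: D_rho rho_sm scale_left_diff_distrib)
  then show ?case using e mode by (intro exI[of _ "e - n"]) simp
qed

lemma generated_nonpos_mode:
  "u \<in> generated w \<Longrightarrow> X \<in> gB l \<Longrightarrow> n \<le> 0 \<Longrightarrow> \<rho> X n u \<in> generated w"
  unfolding generated_def
  by (rule hom_span_into[OF rho_hom]) (auto intro: span_base descendant.mode)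

(* Positive modes are commuted to the right until they hit the singular vector. *)
lemma descendant_mode:
  assumes w: "singular w" and "descendant w u" and "X \<in> gB l"
  shows "\<rho> X n u \<in> generated w"
  using assms(2,3)
proof (induction u arbitrary: X n rule: descendant.induct)
  case self
  then show ?case
  proof (cases "n \<le> 0")
    case True
    then show ?thesis using self by (intro descendant_generated descendant.intros)
  qed (use w in \<open>auto simp: singular_def generated_def span_zero\<close>)
next
  case (mode u Y m)
  show ?case
  proof (cases "n \<le> 0")
    case True
    then show ?thesis by (intro descendant_generated descendant.mode) (use mode in auto)
  next
    case False
    have "\<rho> Y m (\<rho> X n u) \<in> generated w"
      by (rule generated_nonpos_mode[OF mode.IH[OF mode.prems] mode.hyps(2,3)])
    moreover have "\<rho> (comm l X Y) (n + m) u \<in> generated w"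
      by (rule mode.IH[OF gB_comm[OF mode.prems mode.hyps(2)]])
    moreover have "sm (if n + m = 0 then of_int n * k * nform l X Y else 0) u \<in> generated w"
      unfolding generated_def by (rule span_scale, rule span_base) (simp add: mode.hyps(1))
    ultimately show ?thesis
      unfolding rho_swap[OF mode.prems mode.hyps(2)] generated_def by (intro span_add)
  qed
qed

lemma generated_closed:
  assumes w: "singular w" and "D w = sm (of_int d) w"
  shows "u \<in> generated w \<Longrightarrow> X \<in> gB l \<Longrightarrow> \<rho> X n u \<in> generated w"
    and "u \<in> generated w \<Longrightarrow> D u \<in> generated w"
proof -
  show "u \<in> generated w \<Longrightarrow> X \<in> gB l \<Longrightarrow> \<rho> X n u \<in> generated w"
    unfolding generated_def
    by (rule hom_span_into[OF rho_hom]) (auto intro: descendant_mode[OF w, unfolded generated_def])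
  show "u \<in> generated w \<Longrightarrow> D u \<in> generated w"
    unfolding generated_def
  proof (rule hom_span_into[OF D_hom])
    fix x assume "x \<in> {u. descendant w u}"
    then obtain e where "D x = sm (of_int e) x"
      using descendant_degree[OF assms(2)] by auto
    then show "D x \<in> span {u. descendant w u}"
      using \<open>x \<in> _\<close> by (simp add: span_scale span_base)
  qed
qed

(* The operator \<Prod>_{j<N} (D - (j + d)) kills every vector of degree
  between d and d + N - 1, but not the vacuum, which has degree 0. *)
primrec degree_filter :: "int \<Rightarrow> nat \<Rightarrow> 'v \<Rightarrow> 'v" where
  "degree_filter d 0 u = u"
| "degree_filter d (Suc N) u = D (degree_filter d N u) - sm (of_nat N + of_int d) (degree_filter d N u)"

lemma degree_filter_hom: "module_hom sm sm (degree_filter d N)"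
proof (induction N)
  case 0
  then show ?case by (simp add: module_hom_iff module_axioms)
next
  case (Suc N)
  then show ?case
    by (simp add: module_hom_iff module_axioms D_add D_sm D_diff scale_right_distrib
        scale_right_diff_distrib scale_left_commute mult.commute)
qed

lemma degree_filter_eigen:
  "D u = sm c u \<Longrightarrow> degree_filter d N u = sm (\<Prod>j<N. c - (of_nat j + of_int d)) u"
  by (induction N) (simp_all add: D_sm scale_left_diff_distrib[symmetric] algebra_simps)

lemma degree_filter_generated:
  assumes "D w = sm (of_int d) w" and "u \<in> generated w"
  shows "\<exists>N. \<forall>M\<ge>N. degree_filter d M u = 0"
  using assms(2) unfolding generated_def
proof (induction rule: span_induct_alt)
  case base
  then show ?case using module_hom.zero[OF degree_filter_hom] by blast
next
  case (step c x y)
  obtain e where e: "e \<ge> d" "D x = sm (of_int e) x"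
    using descendant_degree[OF assms(1)] step by auto
  obtain N where N: "\<forall>M\<ge>N. degree_filter d M y = 0" using step by auto
  have "degree_filter d M x = 0" if "M > nat (e - d)" for M
  proof -
    have P0: "(\<Prod>j<M. of_int e - (of_nat j + of_int d)) = (0::complex)"
    proof (rule prod_zero)
      show "\<exists>j\<in>{..<M}. of_int e - (of_nat j + of_int d) = (0::complex)"
        using that e(1) by (intro bexI[of _ "nat (e - d)"]) auto
    qed simp
    show ?thesis by (simp only: degree_filter_eigen[OF e(2)] P0 scale_zero_left)
  qed
  then show ?case using N
    by (intro exI[of _ "max N (Suc (nat (e - d)))"])
      (simp add: module_hom.add[OF degree_filter_hom] module_hom.scale[OF degree_filter_hom])
qed

lemma scale_nonzero: "c \<noteq> 0 \<Longrightarrow> v \<noteq> 0 \<Longrightarrow> sm c v \<noteq> 0"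
  by (metis scale_one scale_scale scale_zero_right field_class.field_inverse mult.commute)

lemma degree_filter_vac: "d > 0 \<Longrightarrow> degree_filter d N vac \<noteq> 0"
proof -
  assume d: "d > 0"
  have "(0 - (of_nat j + of_int d) :: complex) \<noteq> 0" for j
  proof -
    have "(of_nat j + of_int d :: complex) = of_int (int j + d)" by simp
    then show ?thesis using d by (simp del: of_int_add)
  qed
  then have "(\<Prod>j<N. 0 - (of_nat j + of_int d)) \<noteq> (0::complex)"
    by (simp only: prod_zero_iff finite_lessThan) blast
  moreover have "degree_filter d N vac = sm (\<Prod>j<N. 0 - (of_nat j + of_int d)) vac"
    by (rule degree_filter_eigen) (simp add: D_vac)
  ultimately show ?thesis
    using scale_nonzero vac_nz by simp
qed

(* In a simple module every singular vector of positive degree is zero: otherwise it would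
  generate the whole module, yet the vacuum has degree 0. *)
theorem singular_vector_zero:
  assumes w: "singular w" and deg: "D w = sm (of_int d) w" and d: "d > 0"
  shows "w = 0"
proof (rule ccontr)
  assume "w \<noteq> 0"
  have "generated w = UNIV"
  proof (rule simple_subspace)
    show "subspace (generated w)" by (simp add: generated_def)
    show "generated w \<noteq> {0}" using descendant_generated[OF self] \<open>w \<noteq> 0\<close> by auto
  qed (use generated_closed[OF w deg] in auto)
  then obtain N where "\<forall>M\<ge>N. degree_filter d M vac = 0"
    using degree_filter_generated[OF deg, of vac] by auto
  then show False using degree_filter_vac[OF d, of N] by auto
qed

end

section \<open>The relation vector\<close>

lemma finite_posD: "finite (posD l)"
  by (rule finite_subset[of _ "UNIV \<times> {1..l} \<times> {1..l}"]) (auto simp: posD_def)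

context simple_vacuum_module
begin

definition short_part :: 'v where
  "short_part = (\<Sum>i\<in>{1..l}. quad (e_short l i) (f_short l i) + quad (f_short l i) (e_short l i))"

definition long_part :: 'v where
  "long_part = (\<Sum>r\<in>posD l. quad (e_root l r) (f_root l r) + quad (f_root l r) (e_root l r))"

definition cartan_part :: 'v where
  "cartan_part = (\<Sum>i\<in>{1..l}. quad (h_short l i) (h_short l i))"

definition relation_vector :: 'v where
  "relation_vector = sm (2 * of_nat l - 1) short_part - (sm 4 long_part + cartan_part)"

lemma mode1_quad_sum:
  assumes X: "X \<in> gB l" and "finite S" and YE: "\<And>i. i \<in> S \<Longrightarrow> Y i \<in> gB l \<and> E i \<in> gB l"
  shows "\<rho> X 1 (\<Sum>i\<in>S. quad (Y i) (E i) + quad (E i) (Y i))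
    = \<rho> (\<lambda>p q. \<Sum>i\<in>S. act1 l k X (Y i) (E i) p q + act1 l k X (E i) (Y i) p q) (-1) vac"
  using assms
  by (simp add: rho_sum rho_add mode1_quad rho_sum_mat rho_add_mat gB_add gB_act1)

lemma relation_vector_mode1:
  assumes X: "X \<in> gB l" and k: "k = - of_nat l + 3/2"
  shows "\<rho> X 1 relation_vector = 0"
proof -
  define S where "S = (\<lambda>p q. \<Sum>i\<in>{1..l}. act1 l k X (e_short l i) (f_short l i) p q
      + act1 l k X (f_short l i) (e_short l i) p q)"
  define L where "L = (\<lambda>p q. \<Sum>r\<in>posD l. act1 l k X (e_root l r) (f_root l r) p q
      + act1 l k X (f_root l r) (e_root l r) p q)"
  define H where "H = (\<lambda>p q. \<Sum>i\<in>{1..l}. act1 l k X (h_short l i) (h_short l i) p q)"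
  have gB: "S \<in> gB l" "L \<in> gB l" "H \<in> gB l"
    unfolding S_def L_def H_def
    by (auto intro!: gB_sum gB_add gB_act1 X finite_posD gB_short gB_root)
  have "\<rho> X 1 short_part = \<rho> S (-1) vac"
    unfolding short_part_def S_def by (rule mode1_quad_sum[OF X]) (auto intro: gB_short)
  moreover have "\<rho> X 1 long_part = \<rho> L (-1) vac"
    unfolding long_part_def L_def by (rule mode1_quad_sum[OF X finite_posD]) (auto intro: gB_root)
  moreover have "\<rho> X 1 cartan_part = \<rho> H (-1) vac"
    unfolding cartan_part_def H_def using X
    by (subst rho_sum_mat) (auto simp: rho_sum mode1_quad gB_act1 gB_short)
  ultimately have "\<rho> X 1 relation_vector
      = \<rho> (\<lambda>p q. (2 * of_nat l - 1) * S p q - (4 * L p q + H p q)) (-1) vac"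
    unfolding relation_vector_def using X gB
    by (simp add: rho_diff rho_add rho_sm rho_diff_mat rho_add_mat rho_scale_mat gB_scale gB_add)
  also have "(\<lambda>p q. (2 * of_nat l - 1) * S p q - (4 * L p q + H p q)) = (\<lambda>p q. 0)"
    unfolding S_def L_def H_def using casimir_relation[OF X k] by simp
  finally show ?thesis by (simp add: rho_zero_mat)
qed

lemma relation_vector_mode2:
  assumes X: "X \<in> gB l"
  shows "\<rho> X 2 relation_vector = 0"
proof -
  have "\<rho> X 2 short_part = 0" "\<rho> X 2 long_part = 0"
    unfolding short_part_def long_part_def using X
    by (simp_all add: rho_sum mode2_quad_sym gB_short gB_root)
  moreover have "\<rho> X 2 cartan_part = 0"
    unfolding cartan_part_def using X
    by (simp add: rho_sum mode2_quad gB_short nform_comm_self)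
  ultimately show ?thesis
    unfolding relation_vector_def using X by (simp add: rho_diff rho_add rho_sm)
qed

lemma relation_vector_mode_high:
  assumes X: "X \<in> gB l" and n: "n \<ge> 3"
  shows "\<rho> X n relation_vector = 0"
  unfolding relation_vector_def short_part_def long_part_def cartan_part_def using X n
  by (simp add: rho_diff rho_add rho_sm rho_sum mode_high_quad gB_short gB_root)

lemma relation_vector_singular:
  assumes k: "k = - of_nat l + 3/2"
  shows "singular relation_vector"
  unfolding singular_def
proof (intro ballI allI impI)
  fix X and n :: int assume "X \<in> gB l" "n > 0"
  then consider "n = 1" | "n = 2" | "n \<ge> 3" by linarith
  then show "\<rho> X n relation_vector = 0"
    using relation_vector_mode1[OF \<open>X \<in> gB l\<close> k] relation_vector_mode2[OF \<open>X \<in> gB l\<close>]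
      relation_vector_mode_high[OF \<open>X \<in> gB l\<close>] by cases auto
qed

lemma relation_vector_degree: "D relation_vector = sm (of_int 2) relation_vector"
proof -
  have "D short_part = sm 2 short_part" "D long_part = sm 2 long_part"
    "D cartan_part = sm 2 cartan_part"
    unfolding short_part_def long_part_def cartan_part_def
    by (simp_all add: D_sum D_add D_quad gB_short gB_root scale_sum_right scale_right_distrib)
  then show ?thesis
    unfolding relation_vector_def
    by (simp add: D_diff D_add D_sm scale_right_diff_distrib scale_right_distrib
        scale_left_commute[of _ 2])
qed

end

theorem lemma5p3:
  fixes l :: nat and sm :: "complex \<Rightarrow> 'v::ab_group_add \<Rightarrow> 'v"
    and \<rho> :: "mat \<Rightarrow> int \<Rightarrow> 'v \<Rightarrow> 'v" and D :: "'v \<Rightarrow> 'v" and vac :: 'v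
  assumes "l \<ge> 4"
    and "is_simple_vacuum_module l (- of_nat l + 3/2) sm \<rho> D vac"
  shows "sm (2 * of_nat l - 1)
           (\<Sum>i\<in>{1..l}. \<rho> (e_short l i) (-1) (\<rho> (f_short l i) (-1) vac)
                        + \<rho> (f_short l i) (-1) (\<rho> (e_short l i) (-1) vac))
       = sm 4 (\<Sum>r\<in>posD l. \<rho> (e_root l r) (-1) (\<rho> (f_root l r) (-1) vac)
                        + \<rho> (f_root l r) (-1) (\<rho> (e_root l r) (-1) vac))
         + (\<Sum>i\<in>{1..l}. \<rho> (h_short l i) (-1) (\<rho> (h_short l i) (-1) vac))"
proof -
  interpret V: simple_vacuum_module l "- of_nat l + 3/2" sm \<rho> D vac
    by unfold_locales (rule assms(2))
  have "V.relation_vector = 0"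
    by (rule V.singular_vector_zero[OF V.relation_vector_singular V.relation_vector_degree]) simp_all
  then show ?thesis
    unfolding V.relation_vector_def V.short_part_def V.long_part_def V.cartan_part_def V.quad_def
    by simp
qed

end
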